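(* Let $\mathcal{D}_n$ be a minimal DFA of a bifix-free language with state set $Q=\{0,\dots,n-1\}$ (initial state $0$, final state $n-2$, empty state $n-1$) and transition semigroup $T(n)$. Let $t,\hat{t}\in T(n)$ and $s\in\mathbf{W}^{\ge 6}_{\mathrm{bf}}(n)$. Suppose that: (1) all states $q\in Q_M$ with $qt\ne qs$ belong to $C$, where $C$ is either an orbit of $s$ or the tree of a state in $s$; (2) all states $q\in Q_M$ with $q\hat{t}\ne qs$ belong to $\hat{C}$, where $\hat{C}$ is either an orbit of $s$ or the tree of a state in $s$; (3) for some $i,j\ge 0$ the transformation $s^it^j$ focuses a colliding pair both of whose states lie in $C$. Then $C\subseteq\hat{C}$ or $\hat{C}\subseteq C$. In particular, if $C$ and $\hat{C}$ are both orbits, or both trees rooted in a state mapped by $s$ to $n-1$, then $C=\hat{C}$.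
   Context: A language is bifix-free if no word of it is a proper prefix or a proper suffix of another word of it. Transformations of $Q$ act on the right, $q(st)=(qs)t$; $T(n)$ is the semigroup of transformations induced by nonempty words. $Q_M=\{1,\dots,n-3\}$. An unordered pair $\{p,q\}$ of distinct states of $Q_M$ is colliding if there is $u\in T(n)$ with $0u=p$ and $ru=q$ for some $r\in Q_M$. A transformation $u$ focuses a pair $\{p,q\}$ if $pu=qu=r$ for a single state $r\in Q_M\cup\{n-2\}$. The underlying digraph of a transformation $s$ has vertex set $Q$ and edges $(q,qs)$; the orbit of $q$ in $s$ is its connected component, $\{p\in Q\mid ps^i=qs^j$ for some $i,j\ge0\}$; a cycle is a cycle of length at least 2 in this digraph; if $q$ does not lie in a cycle, the tree of $q$ is the underlying digraph restricted to the states $p$ having a path from $p$ to $q$. Let $\mathbf{B}_{\mathrm{bf}}(n)$ be the set of all transformations $t$ of $Q$ with $0\notin Qt$, $(n-1)t=n-1$, $(n-2)t=n-1$, and for all $j\ge1$, either $0t^j=n-1$ or $0t^j\ne qt^j$ for all $0<q<n-1$; and $\mathbf{W}^{\ge 6}_{\mathrm{bf}}(n)=\{t\in\mathbf{B}_{\mathrm{bf}}(n)\mid 0t\in\{n-2,n-1\}$, or $0t\in Q_M$ and $qt\in\{n-2,n-1\}$ for all $q\in Q_M\}$. *)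

theory Defs
  imports Main "HOL-Library.Sublist"
begin

(* States are 0..n-1; delta is the transition function, Sigma the alphabet.
   Transformations act on the right: q(uv) = (qu)v. *)

definition dstar :: "(nat \<Rightarrow> 'a \<Rightarrow> nat) \<Rightarrow> nat \<Rightarrow> 'a list \<Rightarrow> nat" where
  "dstar \<delta> q w = foldl \<delta> q w"

definition lang :: "nat \<Rightarrow> 'a set \<Rightarrow> (nat \<Rightarrow> 'a \<Rightarrow> nat) \<Rightarrow> 'a list set" where
  "lang n \<Sigma> \<delta> = {w \<in> lists \<Sigma>. dstar \<delta> 0 w = n - 2}"

definition bifix_free :: "'a list set \<Rightarrow> bool" where
  "bifix_free L \<longleftrightarrow> (\<forall>u\<in>L. \<forall>v\<in>L. \<not> strict_prefix u v \<and> \<not> strict_suffix u v)"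

definition bf_min_dfa :: "nat \<Rightarrow> 'a set \<Rightarrow> (nat \<Rightarrow> 'a \<Rightarrow> nat) \<Rightarrow> bool" where
  "bf_min_dfa n \<Sigma> \<delta> \<longleftrightarrow>
     finite \<Sigma> \<and> n \<ge> 2 \<and>
     (\<forall>q<n. \<forall>a\<in>\<Sigma>. \<delta> q a < n) \<and>
     (\<forall>w\<in>lists \<Sigma>. dstar \<delta> (n - 1) w \<noteq> n - 2) \<and>
     (\<forall>q<n. \<exists>w\<in>lists \<Sigma>. dstar \<delta> 0 w = q) \<and>
     (\<forall>p<n. \<forall>q<n. p \<noteq> q \<longrightarrow>
        (\<exists>w\<in>lists \<Sigma>. (dstar \<delta> p w = n - 2) \<noteq> (dstar \<delta> q w = n - 2))) \<and>
     bifix_free (lang n \<Sigma> \<delta>)"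

definition trans_of :: "nat \<Rightarrow> (nat \<Rightarrow> 'a \<Rightarrow> nat) \<Rightarrow> 'a list \<Rightarrow> nat \<Rightarrow> nat" where
  "trans_of n \<delta> w = (\<lambda>q. if q < n then dstar \<delta> q w else q)"

definition Tsg :: "nat \<Rightarrow> 'a set \<Rightarrow> (nat \<Rightarrow> 'a \<Rightarrow> nat) \<Rightarrow> (nat \<Rightarrow> nat) set" where
  "Tsg n \<Sigma> \<delta> = {trans_of n \<delta> w | w. w \<in> lists \<Sigma> \<and> w \<noteq> []}"

definition QM :: "nat \<Rightarrow> nat set" where
  "QM n = {1..n-3}"

definition colliding :: "nat \<Rightarrow> 'a set \<Rightarrow> (nat \<Rightarrow> 'a \<Rightarrow> nat) \<Rightarrow> nat \<Rightarrow> nat \<Rightarrow> bool" where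
  "colliding n \<Sigma> \<delta> p q \<longleftrightarrow> p \<noteq> q \<and> p \<in> QM n \<and> q \<in> QM n \<and>
     (\<exists>u\<in>Tsg n \<Sigma> \<delta>. \<exists>r\<in>QM n. (u 0 = p \<and> u r = q) \<or> (u 0 = q \<and> u r = p))"

definition focuses :: "nat \<Rightarrow> (nat \<Rightarrow> nat) \<Rightarrow> nat \<Rightarrow> nat \<Rightarrow> bool" where
  "focuses n u p q \<longleftrightarrow> (\<exists>r \<in> QM n \<union> {n - 2}. u p = r \<and> u q = r)"

definition Bbf :: "nat \<Rightarrow> (nat \<Rightarrow> nat) set" where
  "Bbf n = {t. (\<forall>q<n. t q < n) \<and> (\<forall>q<n. t q \<noteq> 0) \<and> t (n - 1) = n - 1 \<and> t (n - 2) = n - 1 \<and>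
     (\<forall>j\<ge>1. (t ^^ j) 0 = n - 1 \<or> (\<forall>q. 0 < q \<and> q < n - 1 \<longrightarrow> (t ^^ j) 0 \<noteq> (t ^^ j) q))}"

definition Wbf6 :: "nat \<Rightarrow> (nat \<Rightarrow> nat) set" where
  "Wbf6 n = {t \<in> Bbf n. t 0 \<in> {n - 2, n - 1} \<or>
                         (t 0 \<in> QM n \<and> (\<forall>q\<in>QM n. t q \<in> {n - 2, n - 1}))}"

definition orbit :: "nat \<Rightarrow> (nat \<Rightarrow> nat) \<Rightarrow> nat \<Rightarrow> nat set" where
  "orbit n s q = {p. p < n \<and> (\<exists>i j. (s ^^ i) p = (s ^^ j) q)}"

definition in_cycle :: "(nat \<Rightarrow> nat) \<Rightarrow> nat \<Rightarrow> bool" where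
  "in_cycle s q \<longleftrightarrow> s q \<noteq> q \<and> (\<exists>k>0. (s ^^ k) q = q)"

definition tree :: "nat \<Rightarrow> (nat \<Rightarrow> nat) \<Rightarrow> nat \<Rightarrow> nat set" where
  "tree n s q = {p. p < n \<and> (\<exists>i. (s ^^ i) p = q)}"

definition is_orbit :: "nat \<Rightarrow> (nat \<Rightarrow> nat) \<Rightarrow> nat set \<Rightarrow> bool" where
  "is_orbit n s C \<longleftrightarrow> (\<exists>q<n. C = orbit n s q)"

definition is_tree :: "nat \<Rightarrow> (nat \<Rightarrow> nat) \<Rightarrow> nat set \<Rightarrow> bool" where
  "is_tree n s C \<longleftrightarrow> (\<exists>q<n. \<not> in_cycle s q \<and> C = tree n s q)"

definition is_tree_to_empty :: "nat \<Rightarrow> (nat \<Rightarrow> nat) \<Rightarrow> nat set \<Rightarrow> bool" where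
  "is_tree_to_empty n s C \<longleftrightarrow>
     (\<exists>q<n. q \<noteq> n - 1 \<and> s q = n - 1 \<and> \<not> in_cycle s q \<and> C = tree n s q)"

end

theory Submission
  imports Defs
begin

text \<open>
  Orbits and trees of s are either nested or disjoint. If C and Ch were disjoint, then th would
  agree with s along every s-path starting in C, since such a path never enters Ch (orbits and
  trees are closed under s-predecessors). Hence s^i t^j and th^i t^j agree on C, so the
  transformation th^i t^j of T(n) would focus a colliding pair. That is impossible for a
  bifix-free language: it would yield two accepted words, one a proper suffix of the other.
  Two nested orbits are equal, and so are two nested trees whose roots are mapped to the empty
  state, because that state is fixed by s.
\<close>

lemma funpow_meet_trans:
  fixes f :: "'a \<Rightarrow> 'a"
  assumes "(f ^^ a) x = (f ^^ b) y" and "(f ^^ c) y = (f ^^ d) z"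
  shows "\<exists>i j. (f ^^ i) x = (f ^^ j) z"
proof -
  have "(f ^^ (c + a)) x = (f ^^ c) ((f ^^ b) y)" using assms(1) by (simp add: funpow_add)
  also have "\<dots> = (f ^^ b) ((f ^^ c) y)" by (metis comp_apply funpow_add add.commute)
  also have "\<dots> = (f ^^ (b + d)) z" using assms(2) by (simp add: funpow_add)
  finally show ?thesis by blast
qed

lemma orbit_eq_if_common:
  assumes "x \<in> orbit n s q1" and "x \<in> orbit n s q2"
  shows "orbit n s q1 = orbit n s q2"
proof -
  have orbit_mono: "orbit n s q \<subseteq> orbit n s q'"
    if xq: "x \<in> orbit n s q" and xq': "x \<in> orbit n s q'" for q q'
  proof
    fix y assume y: "y \<in> orbit n s q"
    obtain a b where "(s ^^ a) y = (s ^^ b) q" using y unfolding orbit_def by blast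
    moreover obtain c d where "(s ^^ c) x = (s ^^ d) q" using xq unfolding orbit_def by blast
    moreover obtain e f where "(s ^^ e) x = (s ^^ f) q'" using xq' unfolding orbit_def by blast
    ultimately obtain i j where "(s ^^ i) y = (s ^^ j) q'"
      by (metis funpow_meet_trans)
    then show "y \<in> orbit n s q'" using y unfolding orbit_def by blast
  qed
  show ?thesis using orbit_mono assms by blast
qed

lemma tree_subset_orbit:
  assumes "x \<in> tree n s r" and "x \<in> orbit n s q"
  shows "tree n s r \<subseteq> orbit n s q"
proof
  fix y assume y: "y \<in> tree n s r"
  obtain a where "(s ^^ a) y = r" using y unfolding tree_def by blast
  moreover obtain b where "(s ^^ b) x = r" using assms(1) unfolding tree_def by blast
  moreover obtain i j where "(s ^^ i) x = (s ^^ j) q" using assms(2) unfolding orbit_def by blast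
  ultimately obtain i' j' where "(s ^^ i') y = (s ^^ j') q" by (metis funpow_meet_trans)
  then show "y \<in> orbit n s q" using y unfolding orbit_def tree_def by blast
qed

lemma tree_subset_tree:
  assumes "(s ^^ a) x = r1" and "(s ^^ b) x = r2" and "a \<le> b"
  shows "tree n s r1 \<subseteq> tree n s r2"
proof
  have "r2 = (s ^^ (b - a + a)) x" using assms(2,3) by simp
  also have "\<dots> = (s ^^ (b - a)) ((s ^^ a) x)" by (simp add: funpow_add)
  finally have "r2 = (s ^^ (b - a)) ((s ^^ a) x)" .
  then have r2: "r2 = (s ^^ (b - a)) r1" using assms(1) by simp
  fix y assume "y \<in> tree n s r1"
  then obtain c where "y < n" "(s ^^ c) y = r1" unfolding tree_def by blast
  then have "y < n" "(s ^^ (b - a + c)) y = r2" using r2 by (simp_all add: funpow_add)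
  then show "y \<in> tree n s r2" unfolding tree_def by blast
qed

lemma trees_nested:
  assumes "x \<in> tree n s r1" and "x \<in> tree n s r2"
  shows "tree n s r1 \<subseteq> tree n s r2 \<or> tree n s r2 \<subseteq> tree n s r1"
proof -
  obtain a where "(s ^^ a) x = r1" using assms(1) unfolding tree_def by blast
  moreover obtain b where "(s ^^ b) x = r2" using assms(2) unfolding tree_def by blast
  ultimately show ?thesis using tree_subset_tree nat_le_linear by metis
qed

lemma orbits_trees_nested:
  assumes "is_orbit n s C \<or> is_tree n s C" and "is_orbit n s D \<or> is_tree n s D"
    and "x \<in> C" and "x \<in> D"
  shows "C \<subseteq> D \<or> D \<subseteq> C"
  using assms unfolding is_orbit_def is_tree_def
  by (metis orbit_eq_if_common tree_subset_orbit trees_nested order_refl)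

lemma nested_orbits_eq:
  assumes "is_orbit n s C" and "is_orbit n s D" and "C \<subseteq> D"
  shows "C = D"
proof -
  obtain q where "q < n" "C = orbit n s q" using assms(1) unfolding is_orbit_def by blast
  then have "q \<in> C" unfolding orbit_def by (metis (mono_tags) funpow_0 mem_Collect_eq)
  moreover obtain q' where "D = orbit n s q'" using assms(2) unfolding is_orbit_def by blast
  ultimately show ?thesis using assms(3) \<open>C = orbit n s q\<close> orbit_eq_if_common by blast
qed

lemma orbit_tree_funpow_preimage:
  assumes "is_orbit n s C \<or> is_tree n s C" and "y < n" and "(s ^^ k) y \<in> C"
  shows "y \<in> C"
  using assms unfolding is_orbit_def is_tree_def orbit_def tree_def
  by (auto simp flip: funpow_add comp_apply[of "s ^^ _" "s ^^ k"])

lemma nested_trees_to_empty_eq: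
  assumes "s (n - 1) = n - 1"
    and "is_tree_to_empty n s C" and "is_tree_to_empty n s D" and "C \<subseteq> D"
  shows "C = D"
proof -
  obtain r1 where r1: "r1 < n" "s r1 = n - 1" "C = tree n s r1"
    using assms(2) unfolding is_tree_to_empty_def by blast
  obtain r2 where r2: "r2 \<noteq> n - 1" "s r2 = n - 1" "D = tree n s r2"
    using assms(3) unfolding is_tree_to_empty_def by blast
  have "r1 \<in> tree n s r1" using r1(1) unfolding tree_def by (metis (mono_tags) funpow_0 mem_Collect_eq)
  then have "r1 \<in> tree n s r2" using r1(3) r2(3) assms(4) by blast
  then obtain a where a: "(s ^^ a) r1 = r2" unfolding tree_def by blast
  have empty_fixed: "(s ^^ m) (n - 1) = n - 1" for m
    using assms(1) by (induction m) auto
  have "a = 0"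
  proof (rule ccontr)
    assume "a \<noteq> 0"
    then obtain m where "a = Suc m" using not0_implies_Suc by blast
    then have "r2 = (s ^^ m) (s r1)" using a by (simp only: funpow_Suc_right comp_apply)
    then show False using r1(2) r2(1) empty_fixed by simp
  qed
  then show ?thesis using a r1(3) r2(3) by simp
qed

lemma funpow_eq_along_path:
  assumes "\<And>k. f ((g ^^ k) x) = g ((g ^^ k) x)"
  shows "(f ^^ k) x = (g ^^ k) x"
  using assms by (induction k) auto

lemma Bbf_funpow_nonzero:
  assumes "s \<in> Bbf n" and "x < n" and "x \<noteq> 0"
  shows "(s ^^ k) x < n \<and> (s ^^ k) x \<noteq> 0"
  using assms unfolding Bbf_def by (induction k) auto

lemma dstar_append: "dstar \<delta> q (u @ v) = dstar \<delta> (dstar \<delta> q u) v"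
  by (simp add: dstar_def)

lemma dstar_Cons: "dstar \<delta> q (a # w) = dstar \<delta> (\<delta> q a) w"
  by (simp add: dstar_def)

lemma dstar_less:
  assumes "bf_min_dfa n \<Sigma> \<delta>" and "q < n" and "w \<in> lists \<Sigma>"
  shows "dstar \<delta> q w < n"
  using assms(2,3)
proof (induction w arbitrary: q)
  case Nil then show ?case by (simp add: dstar_def)
next
  case (Cons a w)
  then have "\<delta> q a < n" using assms(1) unfolding bf_min_dfa_def by auto
  then show ?case using Cons by (simp add: dstar_Cons)
qed

lemma bf_min_dfa_reaches_final:
  assumes dfa: "bf_min_dfa n \<Sigma> \<delta>" and "q < n" and "q \<noteq> n - 1"
  shows "\<exists>w\<in>lists \<Sigma>. dstar \<delta> q w = n - 2"
proof -
  have "n - 1 < n" using dfa unfolding bf_min_dfa_def by auto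
  then obtain w where "w \<in> lists \<Sigma>" "(dstar \<delta> q w = n - 2) \<noteq> (dstar \<delta> (n - 1) w = n - 2)"
    using dfa assms(2,3) unfolding bf_min_dfa_def by metis
  moreover have "dstar \<delta> (n - 1) w \<noteq> n - 2" if "w \<in> lists \<Sigma>" for w
    using dfa that unfolding bf_min_dfa_def by blast
  ultimately show ?thesis by blast
qed

lemma bf_min_dfa_empty_state_step:
  assumes dfa: "bf_min_dfa n \<Sigma> \<delta>" and a: "a \<in> \<Sigma>"
  shows "\<delta> (n - 1) a = n - 1"
proof (rule ccontr)
  assume "\<delta> (n - 1) a \<noteq> n - 1"
  moreover have "\<delta> (n - 1) a < n" using dfa a unfolding bf_min_dfa_def by auto
  ultimately obtain w where "w \<in> lists \<Sigma>" "dstar \<delta> (n - 1) (a # w) = n - 2"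
    using bf_min_dfa_reaches_final[OF dfa] by (auto simp: dstar_Cons)
  then show False using dfa a unfolding bf_min_dfa_def by auto
qed

lemma bf_min_dfa_empty_state_fixed:
  assumes "bf_min_dfa n \<Sigma> \<delta>" and "w \<in> lists \<Sigma>"
  shows "dstar \<delta> (n - 1) w = n - 1"
  using assms(2)
proof (induction w)
  case (Cons a w)
  then show ?case using bf_min_dfa_empty_state_step[OF assms(1)] by (simp only: dstar_Cons)
qed (simp add: dstar_def)

text \<open>The final state has no accepting continuation, or an accepted word would be a proper
  prefix of another.\<close>

lemma bf_min_dfa_final_state_step:
  assumes dfa: "bf_min_dfa n \<Sigma> \<delta>" and a: "a \<in> \<Sigma>"
  shows "\<delta> (n - 2) a = n - 1"
proof (rule ccontr)
  assume "\<delta> (n - 2) a \<noteq> n - 1"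
  moreover have "\<delta> (n - 2) a < n" using dfa a unfolding bf_min_dfa_def by auto
  ultimately obtain w where w: "w \<in> lists \<Sigma>" "dstar \<delta> (\<delta> (n - 2) a) w = n - 2"
    using bf_min_dfa_reaches_final[OF dfa] by blast
  have "n - 2 < n" using dfa unfolding bf_min_dfa_def by auto
  then obtain x where x: "x \<in> lists \<Sigma>" "dstar \<delta> 0 x = n - 2"
    using dfa unfolding bf_min_dfa_def by blast
  have "x \<in> lang n \<Sigma> \<delta>" and "x @ a # w \<in> lang n \<Sigma> \<delta>"
    using x w a unfolding lang_def by (auto simp: dstar_append dstar_Cons)
  moreover have "strict_prefix x (x @ a # w)" by (simp add: strict_prefix_def)
  ultimately show False using dfa unfolding bf_min_dfa_def bifix_free_def by blast
qed

lemma Tsg_less: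
  assumes dfa: "bf_min_dfa n \<Sigma> \<delta>" and "u \<in> Tsg n \<Sigma> \<delta>" and "q < n"
  shows "u q < n"
proof -
  obtain w where "w \<in> lists \<Sigma>" "u = trans_of n \<delta> w" using assms(2) unfolding Tsg_def by blast
  then show ?thesis using dstar_less[OF dfa assms(3)] assms(3) by (simp add: trans_of_def)
qed

lemma Tsg_empty_state:
  assumes dfa: "bf_min_dfa n \<Sigma> \<delta>" and "u \<in> Tsg n \<Sigma> \<delta>"
  shows "u (n - 1) = n - 1"
proof -
  obtain w where w: "w \<in> lists \<Sigma>" "u = trans_of n \<delta> w" using assms(2) unfolding Tsg_def by blast
  have "n - 1 < n" using dfa unfolding bf_min_dfa_def by simp
  then show ?thesis using w bf_min_dfa_empty_state_fixed[OF dfa w(1)] by (simp add: trans_of_def)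
qed

lemma Tsg_final_state:
  assumes dfa: "bf_min_dfa n \<Sigma> \<delta>" and "u \<in> Tsg n \<Sigma> \<delta>"
  shows "u (n - 2) = n - 1"
proof -
  obtain w0 where "w0 \<in> lists \<Sigma>" "w0 \<noteq> []" "u = trans_of n \<delta> w0"
    using assms(2) unfolding Tsg_def by blast
  then obtain a w where w: "a \<in> \<Sigma>" "w \<in> lists \<Sigma>" "u = trans_of n \<delta> (a # w)"
    by (cases w0) auto
  have "n \<ge> 2" using dfa unfolding bf_min_dfa_def by simp
  then show ?thesis
    using w bf_min_dfa_final_state_step[OF dfa] bf_min_dfa_empty_state_fixed[OF dfa]
    by (simp add: trans_of_def dstar_Cons)
qed

lemma Tsg_comp:
  assumes dfa: "bf_min_dfa n \<Sigma> \<delta>" and "u \<in> Tsg n \<Sigma> \<delta>" and "v \<in> Tsg n \<Sigma> \<delta>"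
  shows "v \<circ> u \<in> Tsg n \<Sigma> \<delta>"
proof -
  obtain wu where wu: "wu \<in> lists \<Sigma>" "wu \<noteq> []" "u = trans_of n \<delta> wu"
    using assms(2) unfolding Tsg_def by blast
  obtain wv where wv: "wv \<in> lists \<Sigma>" "wv \<noteq> []" "v = trans_of n \<delta> wv"
    using assms(3) unfolding Tsg_def by blast
  have "(v \<circ> u) q = trans_of n \<delta> (wu @ wv) q" for q
  proof (cases "q < n")
    case True
    then have "dstar \<delta> q wu < n" using dstar_less[OF dfa _ wu(1)] by blast
    then show ?thesis using True wu(3) wv(3) by (simp add: trans_of_def dstar_append)
  qed (simp add: wu(3) wv(3) trans_of_def)
  moreover have "wu @ wv \<in> lists \<Sigma>" "wu @ wv \<noteq> []" using wu wv by simp_all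
  ultimately show ?thesis unfolding Tsg_def by blast
qed

lemma Tsg_funpow:
  assumes dfa: "bf_min_dfa n \<Sigma> \<delta>" and u: "u \<in> Tsg n \<Sigma> \<delta>" and "k \<noteq> 0"
  shows "u ^^ k \<in> Tsg n \<Sigma> \<delta>"
  using assms(3)
proof (induction k)
  case (Suc k)
  show ?case
  proof (cases "k = 0")
    case False
    then have "u \<circ> u ^^ k \<in> Tsg n \<Sigma> \<delta>" using Suc.IH Tsg_comp[OF dfa _ u] by blast
    then show ?thesis by (simp only: funpow.simps)
  qed (simp add: u)
qed simp

lemma Tsg_funpow_comp:
  assumes "bf_min_dfa n \<Sigma> \<delta>" and "u \<in> Tsg n \<Sigma> \<delta>" and "v \<in> Tsg n \<Sigma> \<delta>"
    and "i \<noteq> 0 \<or> j \<noteq> 0"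
  shows "(v ^^ j) \<circ> (u ^^ i) \<in> Tsg n \<Sigma> \<delta>"
proof -
  consider "i = 0" "j \<noteq> 0" | "i \<noteq> 0" "j = 0" | "i \<noteq> 0" "j \<noteq> 0" using assms(4) by blast
  then show ?thesis
  proof cases
    case 1
    then show ?thesis using Tsg_funpow[OF assms(1,3)] by simp
  next
    case 2
    then show ?thesis using Tsg_funpow[OF assms(1,2)] by simp
  next
    case 3
    then show ?thesis by (intro Tsg_comp Tsg_funpow assms(1-3))
  qed
qed

text \<open>If 0v = p, rv = q and u focuses {p,q} to a state from
  which some word w is accepted, then for a word x leading from 0 to
  r, both v u w and its proper extension x v u w are accepted.\<close>

theorem Tsg_not_focuses_colliding:
  assumes dfa: "bf_min_dfa n \<Sigma> \<delta>" and u: "u \<in> Tsg n \<Sigma> \<delta>"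
    and col: "colliding n \<Sigma> \<delta> p q"
  shows "\<not> focuses n u p q"
proof
  assume "focuses n u p q"
  then obtain r' where r': "r' \<in> QM n \<union> {n - 2}" "u p = r'" "u q = r'"
    unfolding focuses_def by blast
  obtain v r where v: "v \<in> Tsg n \<Sigma> \<delta>" "r \<in> QM n"
    and "(v 0 = p \<and> v r = q) \<or> (v 0 = q \<and> v r = p)"
    using col unfolding colliding_def by blast
  then have uv: "u (v 0) = r'" "u (v r) = r'" using r' by auto
  have n: "n \<ge> 4" "r < n" "r \<noteq> 0" using v(2) unfolding QM_def by auto
  have "r' < n" "r' \<noteq> n - 1" using r'(1) n(1) unfolding QM_def by auto
  then obtain w where w: "w \<in> lists \<Sigma>" "dstar \<delta> r' w = n - 2"
    using bf_min_dfa_reaches_final[OF dfa] by blast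
  obtain x where x: "x \<in> lists \<Sigma>" "dstar \<delta> 0 x = r"
    using dfa n(2) unfolding bf_min_dfa_def by blast
  obtain wv where wv: "wv \<in> lists \<Sigma>" "v = trans_of n \<delta> wv"
    using v(1) unfolding Tsg_def by blast
  obtain wu where wu: "wu \<in> lists \<Sigma>" "u = trans_of n \<delta> wu"
    using u unfolding Tsg_def by blast
  have accept: "dstar \<delta> q0 (wv @ wu @ w) = n - 2" if "q0 < n" "u (v q0) = r'" for q0
  proof -
    have "v q0 < n" using Tsg_less[OF dfa v(1) that(1)] .
    then have "dstar \<delta> (dstar \<delta> q0 wv) wu = r'"
      using that wu(2) wv(2) by (simp add: trans_of_def)
    then show ?thesis using w(2) by (simp add: dstar_append)
  qed
  let ?z = "wv @ wu @ w"
  have "?z \<in> lang n \<Sigma> \<delta>"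
    using accept[of 0] uv(1) n(1) wv(1) wu(1) w(1) unfolding lang_def by simp
  moreover have "x @ ?z \<in> lang n \<Sigma> \<delta>"
    using accept[of r] uv(2) n(2) x wv(1) wu(1) w(1) unfolding lang_def
    by (simp add: dstar_append)
  moreover have "x \<noteq> []" using x(2) n(3) by (auto simp: dstar_def)
  then have "strict_suffix ?z (x @ ?z)"
    by (auto simp: strict_suffix_def suffix_def)
  ultimately show False using dfa unfolding bf_min_dfa_def bifix_free_def by blast
qed

lemma Tsg_agrees_off_support:
  assumes dfa: "bf_min_dfa n \<Sigma> \<delta>" and th: "th \<in> Tsg n \<Sigma> \<delta>" and s: "s \<in> Bbf n"
    and Ch: "is_orbit n s Ch \<or> is_tree n s Ch"
    and h2: "\<forall>q\<in>QM n. th q \<noteq> s q \<longrightarrow> q \<in> Ch"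
    and x: "x \<in> QM n" "x \<notin> Ch"
  shows "(th ^^ k) x = (s ^^ k) x"
proof (rule funpow_eq_along_path)
  fix k
  let ?y = "(s ^^ k) x"
  have "x < n" "x \<noteq> 0" "n \<ge> 4" using x(1) unfolding QM_def by auto
  then have "?y < n" "?y \<noteq> 0" using Bbf_funpow_nonzero[OF s] by simp_all
  then have "?y \<in> QM n \<or> ?y = n - 2 \<or> ?y = n - 1" unfolding QM_def by auto
  moreover have "?y \<notin> Ch" using orbit_tree_funpow_preimage[OF Ch \<open>x < n\<close>] x(2) by blast
  moreover have "s (n - 2) = n - 1" "s (n - 1) = n - 1" using s unfolding Bbf_def by auto
  ultimately show "th ?y = s ?y"
    using h2 Tsg_final_state[OF dfa th] Tsg_empty_state[OF dfa th] by auto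
qed

theorem mainTheorem11:
  fixes n :: nat and \<Sigma> :: "'a set" and \<delta> :: "nat \<Rightarrow> 'a \<Rightarrow> nat"
    and t th s :: "nat \<Rightarrow> nat" and C Ch :: "nat set"
  assumes dfa: "bf_min_dfa n \<Sigma> \<delta>"
    and t: "t \<in> Tsg n \<Sigma> \<delta>" and th: "th \<in> Tsg n \<Sigma> \<delta>"
    and s: "s \<in> Wbf6 n"
    and C: "is_orbit n s C \<or> is_tree n s C"
    and Ch: "is_orbit n s Ch \<or> is_tree n s Ch"
    and h1: "\<forall>q\<in>QM n. t q \<noteq> s q \<longrightarrow> q \<in> C"
    and h2: "\<forall>q\<in>QM n. th q \<noteq> s q \<longrightarrow> q \<in> Ch"
    and h3: "\<exists>i j p q. colliding n \<Sigma> \<delta> p q \<and> p \<in> C \<and> q \<in> C \<and>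
                       focuses n ((t ^^ j) \<circ> (s ^^ i)) p q"
  shows "(C \<subseteq> Ch \<or> Ch \<subseteq> C) \<and>
         ((is_orbit n s C \<and> is_orbit n s Ch) \<or>
          (is_tree_to_empty n s C \<and> is_tree_to_empty n s Ch) \<longrightarrow> C = Ch)"
proof -
  obtain i j p q where col: "colliding n \<Sigma> \<delta> p q" and pq: "p \<in> C" "q \<in> C"
    and foc: "focuses n ((t ^^ j) \<circ> (s ^^ i)) p q" using h3 by blast
  have "p \<in> QM n" "q \<in> QM n" "p \<noteq> q" using col unfolding colliding_def by auto
  have s_Bbf: "s \<in> Bbf n" using s unfolding Wbf6_def by blast
  then have s_empty: "s (n - 1) = n - 1" unfolding Bbf_def by blast
  have nested: "C \<subseteq> Ch \<or> Ch \<subseteq> C"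
  proof (cases "C \<inter> Ch = {}")
    case True
    then have "p \<notin> Ch" "q \<notin> Ch" using pq by auto
    then have "(th ^^ i) p = (s ^^ i) p" "(th ^^ i) q = (s ^^ i) q"
      using Tsg_agrees_off_support[OF dfa th s_Bbf Ch h2] \<open>p \<in> QM n\<close> \<open>q \<in> QM n\<close> by blast+
    then have "focuses n ((t ^^ j) \<circ> (th ^^ i)) p q" using foc by (simp add: focuses_def)
    moreover have "i \<noteq> 0 \<or> j \<noteq> 0"
    proof (rule ccontr)
      assume "\<not> (i \<noteq> 0 \<or> j \<noteq> 0)"
      then show False using foc \<open>p \<noteq> q\<close> unfolding focuses_def by simp
    qed
    ultimately show ?thesis
      using Tsg_not_focuses_colliding[OF dfa Tsg_funpow_comp[OF dfa th t] col] by blast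
  qed (use orbits_trees_nested[OF C Ch] in blast)
  moreover have "C = Ch" if "is_orbit n s C" "is_orbit n s Ch"
    using nested nested_orbits_eq that by blast
  moreover have "C = Ch" if "is_tree_to_empty n s C" "is_tree_to_empty n s Ch"
    using nested nested_trees_to_empty_eq[of s n, OF s_empty] that by blast
  ultimately show ?thesis by blast
qed

end
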